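(* Assume the following statement holds: for every base $b>2$, every integer $n$ with $1<n<b$, and every symmetric $(n,b)$-palintiple with carries $c_k,\ldots,c_0$, one has $c_j\equiv 0 \pmod{n-1}$ for all $0\le j\le k$. Then, for integers $b>2$ and $1<n<b$, an $(n,b)$-palintiple is symmetric if and only if $n+1$ divides $b$.
   Context: Let $b>2$ be an integer base and write $(d_k,d_{k-1},\ldots,d_0)_b=\sum_{j=0}^k d_j b^j$ with $0\le d_j<b$. A natural number $p=(d_k,\ldots,d_0)_b$ with $d_k\neq 0$ and $d_0\neq 0$ that is not a base-$b$ palindrome is an $(n,b)$-palintiple if $(d_k,\ldots,d_0)_b=n\,(d_0,d_1,\ldots,d_k)_b$ for an integer $n$ with $1<n<b$. Its carries $c_0,\ldots,c_{k+1}$ are the carries arising in the base-$b$ multiplication of $(d_0,\ldots,d_k)_b$ by $n$: $c_0=0$ and $n d_{k-j}+c_j=d_j+b\,c_{j+1}$ for $0\le j\le k$ (so $c_{k+1}=0$). The palintiple is symmetric if $c_j=c_{k-j}$ for all $0\le j\le k$, shifted-symmetric if $c_j=c_{k-j+1}$ for all $0\le j\le k$, and asymmetric if it is neither. *)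

theory Defs
  imports "HOL-Number_Theory.Cong"
begin

definition digit :: "nat \<Rightarrow> nat \<Rightarrow> nat \<Rightarrow> nat" where
  "digit b p j = p div b ^ j mod b"

definition revnum :: "nat \<Rightarrow> nat \<Rightarrow> nat \<Rightarrow> nat" where
  "revnum b k p = (\<Sum>j\<le>k. digit b p (k - j) * b ^ j)"

definition palintiple :: "nat \<Rightarrow> nat \<Rightarrow> nat \<Rightarrow> nat \<Rightarrow> bool" where
  "palintiple n b k p \<longleftrightarrow>
     1 < n \<and> n < b \<and> b ^ k \<le> p \<and> p < b ^ (Suc k) \<and>
     digit b p 0 \<noteq> 0 \<and>
     (\<exists>j\<le>k. digit b p j \<noteq> digit b p (k - j)) \<and>
     p = n * revnum b k p"

text \<open>Carries of the base-b multiplication of (d_0,...,d_k)_b by n: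
  c_0 = 0, n d_{k-j} + c_j = d_j + b c_{j+1}.\<close>
fun carry :: "nat \<Rightarrow> nat \<Rightarrow> nat \<Rightarrow> nat \<Rightarrow> nat \<Rightarrow> nat" where
  "carry n b k p 0 = 0"
| "carry n b k p (Suc j) = (n * digit b p (k - j) + carry n b k p j) div b"

definition symmetric_pal :: "nat \<Rightarrow> nat \<Rightarrow> nat \<Rightarrow> nat \<Rightarrow> bool" where
  "symmetric_pal n b k p \<longleftrightarrow> (\<forall>j\<le>k. carry n b k p j = carry n b k p (k - j))"

definition shifted_symmetric_pal :: "nat \<Rightarrow> nat \<Rightarrow> nat \<Rightarrow> nat \<Rightarrow> bool" where
  "shifted_symmetric_pal n b k p \<longleftrightarrow> (\<forall>j\<le>k. carry n b k p j = carry n b k p (k - j + 1))"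

end

theory Submission
  imports Defs
begin

text \<open>Comparing the units column and the leading column of the multiplication
  n * (d_0, ..., d_k)_b of a symmetric palintiple gives d_k = n d_0 and
  (n^2 - 1) d_0 = b c_1. Since 0 < c_1 < n and, by hypothesis, n - 1 divides c_1,
  we get c_1 = n - 1 and hence b = (n + 1) d_0. Conversely, if n + 1 divides b,
  adding d_(k-j) to both sides of the j-th column equation shows
  c_j = d_j + d_(k-j) (mod n + 1); this is symmetric in j and k - j, and all carries
  are less than n, so c_j = c_(k-j).\<close>

lemma sum_power_cong_prefix:
  fixes b :: nat
  assumes "j \<le> m"
  shows "[(\<Sum>i<j. f i * b ^ i) = (\<Sum>i<m. f i * b ^ i)] (mod b ^ j)"
  using assms
proof (induction m rule: dec_induct)
  case base
  show ?case by simp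
next
  case (step m)
  have "b ^ j dvd f m * b ^ m"
    using le_imp_power_dvd[OF step.hyps(1), of b] by (rule dvd_mult)
  then have "[0 = f m * b ^ m] (mod b ^ j)"
    by (simp add: cong_0_iff cong_sym)
  from cong_add[OF step.IH this] show ?case
    by simp
qed

definition revnum_low :: "nat \<Rightarrow> nat \<Rightarrow> nat \<Rightarrow> nat \<Rightarrow> nat" where
  "revnum_low b k p j = (\<Sum>i<j. digit b p (k - i) * b ^ i)"

lemma revnum_eq_revnum_low: "revnum b k p = revnum_low b k p (Suc k)"
  unfolding revnum_def revnum_low_def by (simp add: lessThan_Suc_atMost)

lemma revnum_low_cong_revnum:
  "j \<le> Suc k \<Longrightarrow> [revnum_low b k p j = revnum b k p] (mod b ^ j)"
  unfolding revnum_eq_revnum_low revnum_low_def by (rule sum_power_cong_prefix)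

lemma carry_less:
  assumes "0 < n" "0 < b"
  shows "carry n b k p j < n"
proof (induction j)
  case 0
  show ?case using assms by simp
next
  case (Suc j)
  have "digit b p (k - j) < b"
    using assms(2) by (simp add: digit_def)
  then have "n * (digit b p (k - j) + 1) \<le> n * b"
    by (intro mult_le_mono2) simp
  then have "n * digit b p (k - j) + n \<le> n * b"
    by (simp add: algebra_simps)
  with Suc.IH have "n * digit b p (k - j) + carry n b k p j < n * b"
    by linarith
  then show ?case
    by (simp add: less_mult_imp_div_less)
qed

text \<open>The invariant of schoolbook multiplication: after the j lowest columns,
  the j lowest digits of the product are written down and c_j is carried.\<close>

lemma carry_invariant:
  assumes b: "0 < b" and pal: "p = n * revnum b k p" and "j \<le> Suc k"
  shows "n * revnum_low b k p j = p mod b ^ j + b ^ j * carry n b k p j"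
  using assms(3)
proof (induction j)
  case 0
  show ?case by (simp add: revnum_low_def)
next
  case (Suc j)
  let ?s = "carry n b k p j + n * digit b p (k - j)"
  have low: "n * revnum_low b k p (Suc j) = p mod b ^ j + b ^ j * ?s"
    using Suc by (simp add: revnum_low_def algebra_simps)
  have "[n * revnum_low b k p (Suc j) = p] (mod b ^ Suc j)"
    using cong_scalar_left[OF revnum_low_cong_revnum[OF Suc.prems]] pal
    by metis
  then have "p mod b ^ Suc j = (p mod b ^ j + b ^ j * ?s) mod (b ^ j * b)"
    by (simp add: low cong_def mult.commute)
  also have "\<dots> = p mod b ^ j + b ^ j * (?s mod b)"
    using b by (simp add: mod_mult2_eq)
  finally have low_digits: "p mod b ^ Suc j = p mod b ^ j + b ^ j * (?s mod b)" .
  have "b ^ j * ?s = b ^ j * (?s mod b + b * (?s div b))"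
    by simp
  then have "b ^ j * ?s = b ^ j * (?s mod b) + b ^ Suc j * (?s div b)"
    by (simp only: distrib_left power_Suc2 mult.assoc)
  then show ?case
    using low low_digits by (simp add: ac_simps)
qed

lemma column_equation:
  assumes b: "0 < b" and pal: "p = n * revnum b k p" and "j \<le> k"
  shows "n * digit b p (k - j) + carry n b k p j = digit b p j + b * carry n b k p (Suc j)"
proof -
  have "p mod b ^ Suc j = p mod b ^ j + b ^ j * digit b p j"
    by (metis mod_mult2_eq power_Suc2 digit_def add.commute)
  then have "p mod b ^ j + b ^ j * digit b p j + b ^ Suc j * carry n b k p (Suc j)
      = n * revnum_low b k p (Suc j)"
    using carry_invariant[OF b pal, of "Suc j"] assms(3) by simp
  also have "\<dots> = p mod b ^ j + b ^ j * carry n b k p j + b ^ j * (n * digit b p (k - j))"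
    using carry_invariant[OF b pal, of j] assms(3)
    by (simp add: revnum_low_def algebra_simps)
  finally have "b ^ j * (digit b p j + b * carry n b k p (Suc j))
      = b ^ j * (n * digit b p (k - j) + carry n b k p j)"
    by (simp add: algebra_simps)
  then show ?thesis
    using b by simp
qed

lemma carry_Suc_top:
  assumes "0 < b" and "p = n * revnum b k p" and "p < b ^ Suc k"
  shows "carry n b k p (Suc k) = 0"
  using carry_invariant[OF assms(1,2), of "Suc k"] assms(1-3)
  by (simp flip: revnum_eq_revnum_low)

lemma carry_cong_digit_sum:
  assumes "0 < b" and "p = n * revnum b k p" and "(n + 1) dvd b" and "j \<le> k"
  shows "[carry n b k p j = digit b p j + digit b p (k - j)] (mod n + 1)"
proof -
  obtain t where t: "b = (n + 1) * t"
    using assms(3) by blast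
  have "(n + 1) * digit b p (k - j) + carry n b k p j
      = digit b p j + digit b p (k - j) + (n + 1) * (t * carry n b k p (Suc j))"
    using column_equation[OF assms(1,2,4)] t by (simp add: algebra_simps)
  then show ?thesis
    by (metis cong_def mod_mult_self2 mod_mult_self4)
qed

lemma dvd_imp_symmetric_pal:
  assumes "0 < n" and "0 < b" and "p = n * revnum b k p" and "(n + 1) dvd b"
  shows "symmetric_pal n b k p"
  unfolding symmetric_pal_def
proof (intro allI impI)
  fix j
  assume "j \<le> k"
  then have "[carry n b k p j = carry n b k p (k - j)] (mod n + 1)"
    using carry_cong_digit_sum[OF assms(2-4)]
    by (metis add.commute cong_sym cong_trans diff_diff_cancel diff_le_self)
  then show "carry n b k p j = carry n b k p (k - j)"
    using carry_less[OF assms(1,2), of k p] by (simp add: cong_less_modulus_unique_nat less_SucI)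
qed

lemma palintiple_length_pos:
  assumes "palintiple n b k p"
  shows "0 < k"
proof (rule ccontr)
  assume "\<not> 0 < k"
  then show False
    using assms unfolding palintiple_def by auto
qed

lemma symmetric_palintiple_units_column:
  assumes "palintiple n b k p" and "symmetric_pal n b k p"
  shows "n * n * digit b p 0 = digit b p 0 + b * carry n b k p 1"
proof -
  have b: "0 < b" and pal: "p = n * revnum b k p" and "p < b ^ Suc k"
    using assms(1) unfolding palintiple_def by auto
  have "carry n b k p k = 0"
    using assms(2) unfolding symmetric_pal_def by (metis carry.simps(1) diff_self_eq_0 order_refl)
  then have "digit b p k = n * digit b p 0"
    using column_equation[OF b pal, of k] carry_Suc_top[OF b pal \<open>p < b ^ Suc k\<close>] by simp
  moreover have "n * digit b p k = digit b p 0 + b * carry n b k p 1"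
    using column_equation[OF b pal, of 0] by simp
  ultimately show ?thesis
    by (simp add: mult.assoc)
qed

lemma base_eq_of_units_column:
  fixes n b d c :: nat
  assumes "1 < n" and "d \<noteq> 0" and "c < n" and "(n - 1) dvd c"
    and units: "n * n * d = d + b * c"
  shows "b = (n + 1) * d"
proof -
  obtain m where n: "n = Suc m" and "0 < m"
    using assms(1) by (cases n) auto
  have "c \<noteq> 0"
  proof
    assume "c = 0"
    then have "(m * m + 2 * m) * d = 0"
      using units n by (simp add: algebra_simps)
    then show False
      using \<open>0 < m\<close> assms(2) by simp
  qed
  moreover obtain q where "c = m * q"
    using assms(4) n by auto
  ultimately have "c = m"
    using assms(3) n by (cases q) auto
  then have "m * ((m + 2) * d) = m * b"
    using units n by (simp add: algebra_simps)
  then show ?thesis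
    using n \<open>0 < m\<close> by simp
qed

lemma symmetric_palintiple_base_eq:
  assumes "palintiple n b k p" and "symmetric_pal n b k p" and "(n - 1) dvd carry n b k p 1"
  shows "b = (n + 1) * digit b p 0"
proof (rule base_eq_of_units_column)
  show "1 < n" and "digit b p 0 \<noteq> 0"
    using assms(1) unfolding palintiple_def by auto
  show "carry n b k p 1 < n"
    using assms(1) unfolding palintiple_def by (intro carry_less) auto
qed (use assms symmetric_palintiple_units_column in auto)

theorem corollary1:
  assumes hyp: "\<forall>b n k p. 2 < b \<longrightarrow> 1 < n \<longrightarrow> n < b \<longrightarrow>
                  palintiple n b k p \<longrightarrow> symmetric_pal n b k p \<longrightarrow>
                  (\<forall>j\<le>k. [carry n b k p j = 0] (mod (n - 1)))"
    and "2 < (b::nat)" and "1 < (n::nat)" and "n < b"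
    and "palintiple n b k p"
  shows "symmetric_pal n b k p \<longleftrightarrow> (n + 1) dvd b"
proof
  assume sym: "symmetric_pal n b k p"
  have "1 \<le> k"
    using palintiple_length_pos[OF assms(5)] by simp
  then have "[carry n b k p 1 = 0] (mod n - 1)"
    using hyp assms(2-5) sym by blast
  then have "(n - 1) dvd carry n b k p 1"
    unfolding cong_0_iff .
  then show "(n + 1) dvd b"
    using symmetric_palintiple_base_eq[OF assms(5) sym] by (metis dvd_triv_left)
next
  assume "(n + 1) dvd b"
  moreover have "p = n * revnum b k p"
    using assms(5) unfolding palintiple_def by blast
  ultimately show "symmetric_pal n b k p"
    using dvd_imp_symmetric_pal assms(2,3) by simp
qed

end
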